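(* Let $a_1,a_2,a_3$ be assemblies of connected graphs on the same finite vertex set such that the components of $a_1$ and of $a_2$ are regular graphs. If $a_1$ divides $a_2$ and $a_2$ divides $a_3$, then $a_1$ divides $a_3$ and $\phi_{(a_2,a_3/a_2)}(x,t)$ divides $\phi_{(a_1,a_3/a_1)}(x,t)$ in $\mathbb R[x,t]$.
   Context: All graphs finite and simple. Identify a graph on a finite set $V$ with the assembly of its connected components. $a_1$ divides $a_2$ if there is a graph $h$ whose vertex set is the set of vertex sets $B_1,\dots,B_k$ of the components of $a_1$ with $E(a_2)=E(a_1)\cup\{\{x,y\}:x\in B,y\in B',\{B,B'\}\in E(h)\}$; then $a_2/a_1:=h$. For an assembly $a$ of regular graphs $g_1,\dots,g_k$ on blocks $B_j$ with $n_j=|B_j|$, regularities $r_j$, and a graph $h$ on $\{B_1,\dots,B_k\}$, let $N_j=\sum_{s:\{B_s,B_j\}\in E(h)}n_s$; $A(a,h)$ is the $k\times k$ matrix with diagonal $r_j$ and $(i,j)$ entry ($i\neq j$) $\sqrt{n_in_j}$ if $\{B_i,B_j\}\in E(h)$, else $0$; $D(a,h)=\mathrm{diag}(r_j+N_j)$; and $\phi_{(a,h)}(x,t)=\det\big(xI_k-(A(a,h)-tD(a,h))\big)$. *)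

theory Defs
  imports "HOL-Computational_Algebra.Polynomial" "Jordan_Normal_Form.Determinant"
begin

(* An assembly of connected graphs is identified with
   the graph which is the disjoint union of them (its connected components). *)

definition simple_graph :: "'a set \<Rightarrow> 'a set set \<Rightarrow> bool" where
  "simple_graph V E \<longleftrightarrow> finite V \<and>
     (\<forall>e\<in>E. \<exists>x y. x \<noteq> y \<and> x \<in> V \<and> y \<in> V \<and> e = {x, y})"

definition adj :: "'a set set \<Rightarrow> 'a \<Rightarrow> 'a \<Rightarrow> bool" where
  "adj E x y \<longleftrightarrow> {x, y} \<in> E"

definition components :: "'a set \<Rightarrow> 'a set set \<Rightarrow> 'a set set" where
  "components V E = {{y \<in> V. (adj E)\<^sup>*\<^sup>* x y} | x. x \<in> V}"

definition degree :: "'a set set \<Rightarrow> 'a \<Rightarrow> nat" where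
  "degree E v = card {u. {v, u} \<in> E}"

definition regular_components :: "'a set \<Rightarrow> 'a set set \<Rightarrow> bool" where
  "regular_components V E \<longleftrightarrow>
     (\<forall>B\<in>components V E. \<exists>r. \<forall>v\<in>B. degree E v = r)"

definition lift_edges :: "'a set set set \<Rightarrow> 'a set set" where
  "lift_edges H = {{x, y} | x y B B'. {B, B'} \<in> H \<and> x \<in> B \<and> y \<in> B'}"

definition divides :: "'a set \<Rightarrow> 'a set set \<Rightarrow> 'a set set \<Rightarrow> bool" where
  "divides V E1 E2 \<longleftrightarrow>
     (\<exists>H. simple_graph (components V E1) H \<and> E2 = E1 \<union> lift_edges H)"

definition quot :: "'a set \<Rightarrow> 'a set set \<Rightarrow> 'a set set \<Rightarrow> 'a set set set" where
  "quot V E1 E2 = (THE H. simple_graph (components V E1) H \<and> E2 = E1 \<union> lift_edges H)"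

definition reg :: "'a set set \<Rightarrow> 'a set \<Rightarrow> nat" where
  "reg E B = degree E (SOME v. v \<in> B)"

definition nbsize :: "'a set set \<Rightarrow> 'a set set set \<Rightarrow> 'a set \<Rightarrow> nat" where
  "nbsize Bs H B = (\<Sum>B'\<in>{B' \<in> Bs. {B', B} \<in> H}. card B')"

definition block_list :: "'a set set \<Rightarrow> 'a set list" where
  "block_list Bs = (SOME bs. distinct bs \<and> set bs = Bs)"

definition Aent :: "'a set set \<Rightarrow> 'a set set set \<Rightarrow> 'a set \<Rightarrow> 'a set \<Rightarrow> real" where
  "Aent E H Bi Bj = (if Bi = Bj then real (reg E Bi)
      else if {Bi, Bj} \<in> H then sqrt (real (card Bi) * real (card Bj)) else 0)"

definition Dent :: "'a set set \<Rightarrow> 'a set set set \<Rightarrow> 'a set set \<Rightarrow> 'a set \<Rightarrow> 'a set \<Rightarrow> real" where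
  "Dent E H Bs Bi Bj = (if Bi = Bj then real (reg E Bi + nbsize Bs H Bi) else 0)"

(* R[x,t] is represented as (R[t])[x]: outer variable x, inner variable t *)
definition varx :: "real poly poly" where "varx = [:0, 1:]"
definition vart :: "real poly poly" where "vart = [:[:0, 1:]:]"
definition cst :: "real \<Rightarrow> real poly poly" where "cst c = [:[:c:]:]"

definition phi :: "'a set \<Rightarrow> 'a set set \<Rightarrow> 'a set set set \<Rightarrow> real poly poly" where
  "phi V E H = (let Bs = components V E; bs = block_list Bs; k = length bs in
     det (mat k k (\<lambda>(i, j).
        (if i = j then varx else 0)
        - (cst (Aent E H (bs ! i) (bs ! j)) - vart * cst (Dent E H Bs (bs ! i) (bs ! j))))))"

end

theory Submission
  imports Defs
begin

(* Let H13 join two components B, B' of a1 when they are joined in a2/a1 or their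
   components in a2 are joined in a3/a2; then a3 = a1 + lift H13, so a1 divides a3 and
   a3/a1 = H13.  The real matrix W indexed by the components B of a1 and J of a2, with
   W B J = sqrt (|B| / |J|) for B <= J and 0 otherwise, has orthonormal columns because
   the components of a1 partition those of a2, and counting degrees in regular
   components gives A(a1,H13) W = W A(a2,H23) and D(a1,H13) W = W D(a2,H23).  So W
   intertwines the two pencils x I - (A - t D).  Whenever M1 W = W M2 with W left
   invertible, diag M1 1 is similar to a block triangular matrix with diagonal block M2,
   so det M2 divides det M1. *)

lemma det_eq_of_left_inverse_conj:
  fixes S Si D T :: "'b :: comm_ring_1 mat"
  assumes S: "S \<in> carrier_mat n n" and Si: "Si \<in> carrier_mat n n"
    and D: "D \<in> carrier_mat n n" and T: "T \<in> carrier_mat n n"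
    and inv: "Si * S = 1\<^sub>m n" and conj: "D * S = S * T"
  shows "det D = det T"
proof -
  have unit: "det Si * det S = 1"
    using det_mult[OF Si S] inv by simp
  have "det T = det (Si * S * T)" using inv T by simp
  also have "\<dots> = det (Si * (D * S))" using conj assoc_mult_mat[OF Si S T] by simp
  also have "\<dots> = det D * (det Si * det S)"
    using Si D S by (simp add: det_mult[of _ n] mult_ac)
  finally show ?thesis using unit by simp
qed

lemma complementary_idempotents:
  fixes W L :: "'b :: comm_ring_1 mat"
  assumes W: "W \<in> carrier_mat k1 k2" and L: "L \<in> carrier_mat k2 k1" and LW: "L * W = 1\<^sub>m k2"
  defines "Q \<equiv> 1\<^sub>m k1 - W * L"
  shows "Q * W = 0\<^sub>m k1 k2" and "L * Q = 0\<^sub>m k2 k1" and "Q * Q = Q" and "W * L + Q = 1\<^sub>m k1"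
proof -
  have WL: "W * L \<in> carrier_mat k1 k1" using W L by simp
  have Q: "Q \<in> carrier_mat k1 k1" unfolding Q_def using WL by (simp add: minus_carrier_mat)
  show QW: "Q * W = 0\<^sub>m k1 k2"
    unfolding Q_def using W minus_mult_distrib_mat[OF one_carrier_mat WL W]
    by (simp add: assoc_mult_mat[OF W L W] LW)
  show LQ: "L * Q = 0\<^sub>m k2 k1"
    unfolding Q_def using L mult_minus_distrib_mat[OF L one_carrier_mat WL]
    by (simp add: assoc_mult_mat[OF L W L, symmetric] LW)
  have "Q * Q = Q - W * (L * Q)"
    using minus_mult_distrib_mat[OF one_carrier_mat WL Q] assoc_mult_mat[OF W L Q] Q
    by (simp add: Q_def[symmetric])
  then show "Q * Q = Q" using LQ Q W by (auto intro!: eq_matI)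
  show "W * L + Q = 1\<^sub>m k1"
    unfolding Q_def using W L by (intro eq_matI) auto
qed

lemma intertwining_corner_identities:
  fixes M1 W L :: "'b :: comm_ring_1 mat"
  assumes M1: "M1 \<in> carrier_mat k1 k1" and W: "W \<in> carrier_mat k1 k2"
    and L: "L \<in> carrier_mat k2 k1" and LW: "L * W = 1\<^sub>m k2"
  defines "Q \<equiv> 1\<^sub>m k1 - W * L"
  defines "Y \<equiv> Q * M1 * Q + W * L"
  shows "L * Y = L" and "W * (L * M1 * Q) + Q * Y = M1 * Q"
proof -
  note QW = complementary_idempotents(1)[OF W L LW, folded Q_def]
    and LQ = complementary_idempotents(2)[OF W L LW, folded Q_def]
    and QQ = complementary_idempotents(3)[OF W L LW, folded Q_def]
    and WLQ = complementary_idempotents(4)[OF W L LW, folded Q_def]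
  have WL: "W * L \<in> carrier_mat k1 k1" using W L by simp
  have Q: "Q \<in> carrier_mat k1 k1" unfolding Q_def using WL by (simp add: minus_carrier_mat)
  have M1Q: "M1 * Q \<in> carrier_mat k1 k1" using M1 Q by simp
  have "L * Y = L * Q * (M1 * Q) + L * W * L"
    unfolding Y_def using L Q M1 W WL M1Q
    by (simp add: mult_add_distrib_mat[OF L _ WL] assoc_mult_mat[OF L Q M1Q]
        assoc_mult_mat[OF L W L] assoc_mult_mat[OF Q M1 Q])
  then show "L * Y = L" using LQ LW L M1Q by (simp add: left_mult_zero_mat[OF M1Q])
  have "Q * Y = Q * Q * (M1 * Q) + Q * W * L"
    unfolding Y_def using L Q M1 W WL M1Q
    by (simp add: mult_add_distrib_mat[OF Q _ WL] assoc_mult_mat[OF Q Q M1Q]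
        assoc_mult_mat[OF Q W L] assoc_mult_mat[OF Q M1 Q])
  then have "Q * Y = Q * (M1 * Q)" using QQ QW L Q M1Q by simp
  moreover have "W * (L * M1 * Q) = W * L * (M1 * Q)"
    using W L M1 Q by (simp add: assoc_mult_mat[OF W L M1Q] assoc_mult_mat[OF L M1 Q])
  ultimately have "W * (L * M1 * Q) + Q * Y = (W * L + Q) * (M1 * Q)"
    using add_mult_distrib_mat[OF WL Q M1Q] by simp
  then show "W * (L * M1 * Q) + Q * Y = M1 * Q" using WLQ left_mult_one_mat[OF M1Q] by simp
qed

text \<open>With \<open>Q = 1 - W L\<close>, the matrix \<open>S = [[W, Q], [0, L]]\<close> has the left inverse
  \<open>[[L, 0], [Q, W]]\<close> and conjugates \<open>diag M1 1\<close> into the block triangular matrix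
  \<open>[[M2, L M1 Q], [0, Q M1 Q + W L]]\<close>.\<close>

lemma det_dvd_of_intertwining:
  fixes M1 M2 W L :: "'b :: idom mat"
  assumes M1: "M1 \<in> carrier_mat k1 k1" and M2: "M2 \<in> carrier_mat k2 k2"
    and W: "W \<in> carrier_mat k1 k2" and L: "L \<in> carrier_mat k2 k1"
    and LW: "L * W = 1\<^sub>m k2" and MW: "M1 * W = W * M2"
  shows "det M2 dvd det M1"
proof -
  define Q where "Q = 1\<^sub>m k1 - W * L"
  define X where "X = L * M1 * Q"
  define Y where "Y = Q * M1 * Q + W * L"
  note idem = complementary_idempotents[OF W L LW, folded Q_def]
  note corner = intertwining_corner_identities[OF M1 W L LW, folded Q_def, folded Y_def X_def]
  have WL: "W * L \<in> carrier_mat k1 k1" using W L by simp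
  have Q: "Q \<in> carrier_mat k1 k1" unfolding Q_def using WL by (simp add: minus_carrier_mat)
  have X: "X \<in> carrier_mat k2 k1" unfolding X_def using L M1 Q by simp
  have Y: "Y \<in> carrier_mat k1 k1" unfolding Y_def using M1 Q WL by simp
  define S where "S = four_block_mat W Q (0\<^sub>m k2 k2) L"
  define Si where "Si = four_block_mat L (0\<^sub>m k2 k2) Q W"
  define Dg where "Dg = four_block_mat M1 (0\<^sub>m k1 k2) (0\<^sub>m k2 k1) (1\<^sub>m k2)"
  define T where "T = four_block_mat M2 X (0\<^sub>m k1 k2) Y"
  have S: "S \<in> carrier_mat (k2 + k1) (k2 + k1)"
    unfolding S_def using four_block_carrier_mat[OF W L] by (simp add: add.commute)
  have Si: "Si \<in> carrier_mat (k2 + k1) (k2 + k1)"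
    unfolding Si_def using four_block_carrier_mat[OF L W] by (simp add: add.commute)
  have Dg: "Dg \<in> carrier_mat (k2 + k1) (k2 + k1)"
    unfolding Dg_def using four_block_carrier_mat[OF M1 one_carrier_mat[of k2]]
    by (simp add: add.commute)
  have T: "T \<in> carrier_mat (k2 + k1) (k2 + k1)" unfolding T_def using M2 Y by simp
  have "Si * S = four_block_mat (L * W) (L * Q) (Q * W) (Q * Q + W * L)"
    unfolding Si_def S_def using W L Q by (simp add: mult_four_block_mat[OF L _ Q W W Q _ L])
  also have "\<dots> = 1\<^sub>m (k2 + k1)" using LW idem comm_add_mat[OF Q WL] by simp
  finally have inv: "Si * S = 1\<^sub>m (k2 + k1)" .
  have "Dg * S = four_block_mat (M1 * W) (M1 * Q) (0\<^sub>m k2 k2) L"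
    unfolding Dg_def S_def using M1 W Q L
    by (simp add: mult_four_block_mat[OF M1 _ _ one_carrier_mat W Q _ L])
  also have "\<dots> = S * T"
    unfolding S_def T_def using W Q L M2 X Y
    by (simp add: mult_four_block_mat[OF W Q _ L M2 X _ Y] corner MW)
  finally have conj: "Dg * S = S * T" .
  have "det M1 = det Dg"
    unfolding Dg_def using det_four_block_mat_lower_left_zero[OF M1 _ refl one_carrier_mat] by simp
  also have "\<dots> = det T" by (rule det_eq_of_left_inverse_conj[OF S Si Dg T inv conj])
  also have "\<dots> = det M2 * det Y"
    unfolding T_def by (rule det_four_block_mat_lower_left_zero[OF M2 X refl Y])
  finally show ?thesis by simp
qed

lemma cst_hom: "semiring_hom cst"
  by unfold_locales (simp_all add: cst_def one_pCons)

definition pencil :: "nat \<Rightarrow> real mat \<Rightarrow> real mat \<Rightarrow> real poly poly mat" where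
  "pencil k A D = varx \<cdot>\<^sub>m 1\<^sub>m k - (map_mat cst A - vart \<cdot>\<^sub>m map_mat cst D)"

lemma pencil_carrier: "D \<in> carrier_mat k k \<Longrightarrow> pencil k A D \<in> carrier_mat k k"
  by (simp add: pencil_def minus_carrier_mat)

lemma pencil_mult_right:
  assumes A: "A \<in> carrier_mat k1 k1" and D: "D \<in> carrier_mat k1 k1" and W: "W \<in> carrier_mat k1 k2"
  shows "pencil k1 A D * map_mat cst W
    = varx \<cdot>\<^sub>m map_mat cst W - (map_mat cst (A * W) - vart \<cdot>\<^sub>m map_mat cst (D * W))"
proof -
  interpret cst: semiring_hom cst by (rule cst_hom)
  have Ac: "map_mat cst A \<in> carrier_mat k1 k1" and Dc: "vart \<cdot>\<^sub>m map_mat cst D \<in> carrier_mat k1 k1"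
    and Wc: "map_mat cst W \<in> carrier_mat k1 k2" using A D W by simp_all
  have "pencil k1 A D * map_mat cst W = (varx \<cdot>\<^sub>m 1\<^sub>m k1) * map_mat cst W
      - (map_mat cst A * map_mat cst W - (vart \<cdot>\<^sub>m map_mat cst D) * map_mat cst W)"
    unfolding pencil_def
    using minus_mult_distrib_mat[OF _ minus_carrier_mat[OF Dc] Wc] minus_mult_distrib_mat[OF Ac Dc Wc]
    by simp
  then show ?thesis using A D W
    by (simp add: mult_smult_assoc_mat[of _ k1 k1] cst.mat_hom_mult)
qed

lemma pencil_mult_left:
  assumes A: "A \<in> carrier_mat k2 k2" and D: "D \<in> carrier_mat k2 k2" and W: "W \<in> carrier_mat k1 k2"
  shows "map_mat cst W * pencil k2 A D
    = varx \<cdot>\<^sub>m map_mat cst W - (map_mat cst (W * A) - vart \<cdot>\<^sub>m map_mat cst (W * D))"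
proof -
  interpret cst: semiring_hom cst by (rule cst_hom)
  have Ac: "map_mat cst A \<in> carrier_mat k2 k2" and Dc: "vart \<cdot>\<^sub>m map_mat cst D \<in> carrier_mat k2 k2"
    and Wc: "map_mat cst W \<in> carrier_mat k1 k2" and Dc': "map_mat cst D \<in> carrier_mat k2 k2"
    using A D W by simp_all
  have "map_mat cst W * pencil k2 A D = map_mat cst W * (varx \<cdot>\<^sub>m 1\<^sub>m k2)
      - (map_mat cst W * map_mat cst A - map_mat cst W * (vart \<cdot>\<^sub>m map_mat cst D))"
    unfolding pencil_def
    using mult_minus_distrib_mat[OF Wc _ minus_carrier_mat[OF Dc]] mult_minus_distrib_mat[OF Wc Ac Dc]
    by simp
  then show ?thesis using A D W
    by (simp add: mult_smult_distrib[OF Wc one_carrier_mat] mult_smult_distrib[OF Wc Dc']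
        cst.mat_hom_mult)
qed

lemma pencil_intertwine:
  assumes "A1 \<in> carrier_mat k1 k1" and "D1 \<in> carrier_mat k1 k1"
    and "A2 \<in> carrier_mat k2 k2" and "D2 \<in> carrier_mat k2 k2" and "W \<in> carrier_mat k1 k2"
    and "A1 * W = W * A2" and "D1 * W = W * D2"
  shows "pencil k1 A1 D1 * map_mat cst W = map_mat cst W * pencil k2 A2 D2"
  using assms by (simp add: pencil_mult_right pencil_mult_left)

lemma symp_adj: "symp (adj E)"
  by (rule sympI) (simp add: adj_def insert_commute)

lemma simple_graph_edgeD:
  assumes "simple_graph V E" and "{x, y} \<in> E"
  shows "x \<in> V \<and> y \<in> V \<and> x \<noteq> y"
proof -
  obtain a b where "a \<noteq> b" "a \<in> V" "b \<in> V" "{x, y} = {a, b}"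
    using assms unfolding simple_graph_def by blast
  then show ?thesis by (auto simp: doubleton_eq_iff)
qed

lemma component_eq:
  assumes "B \<in> components V E" and "x \<in> B"
  shows "B = {y \<in> V. (adj E)\<^sup>*\<^sup>* x y}"
proof -
  obtain z where B: "B = {y \<in> V. (adj E)\<^sup>*\<^sup>* z y}"
    using assms(1) unfolding components_def by auto
  with assms(2) have zx: "(adj E)\<^sup>*\<^sup>* z x" by auto
  then have xz: "(adj E)\<^sup>*\<^sup>* x z" by (rule sympD[OF symp_rtranclp[OF symp_adj]])
  have "(adj E)\<^sup>*\<^sup>* z y \<longleftrightarrow> (adj E)\<^sup>*\<^sup>* x y" for y
    using rtranclp_trans[OF xz, of y] rtranclp_trans[OF zx, of y] by blast
  then show ?thesis unfolding B by simp
qed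

lemma component_of_mem: "x \<in> V \<Longrightarrow> {y \<in> V. (adj E)\<^sup>*\<^sup>* x y} \<in> components V E"
  unfolding components_def by auto

lemma components_cover: "x \<in> V \<Longrightarrow> \<exists>B \<in> components V E. x \<in> B"
  by (rule bexI[OF _ component_of_mem]) auto

lemma component_subset: "B \<in> components V E \<Longrightarrow> B \<subseteq> V"
  unfolding components_def by auto

lemma component_nonempty: "B \<in> components V E \<Longrightarrow> B \<noteq> {}"
  unfolding components_def by auto

lemma component_unique:
  assumes "B \<in> components V E" and "B' \<in> components V E" and "x \<in> B" and "x \<in> B'"
  shows "B = B'"
  using component_eq[OF assms(1,3)] component_eq[OF assms(2,4)] by (rule trans[OF _ sym])

lemma pairwise_disjnt_components:
  assumes "F \<subseteq> components V E"
  shows "pairwise disjnt F"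
proof (rule pairwiseI)
  fix B B' assume "B \<in> F" "B' \<in> F" "B \<noteq> B'"
  then show "disjnt B B'"
    using assms component_unique[of B V E B'] unfolding disjnt_def by blast
qed

lemma finite_components: "finite V \<Longrightarrow> finite (components V E)"
  by (rule finite_subset[of _ "Pow V"]) (auto dest: component_subset)

lemma finite_component: "finite V \<Longrightarrow> B \<in> components V E \<Longrightarrow> finite B"
  using finite_subset[OF component_subset] .

lemma card_component_pos: "finite V \<Longrightarrow> B \<in> components V E \<Longrightarrow> card B > 0"
  by (simp add: card_gt_0_iff finite_component component_nonempty)

lemma component_edge_closed:
  assumes "simple_graph V E" and "{x, y} \<in> E" and B: "B \<in> components V E" and "x \<in> B"
  shows "y \<in> B"
proof -
  have "y \<in> V" and "adj E x y" using simple_graph_edgeD[OF assms(1,2)] assms(2) by (auto simp: adj_def)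
  then show ?thesis using component_eq[OF B \<open>x \<in> B\<close>] by auto
qed

lemma reg_eq_degree:
  assumes "regular_components V E" and B: "B \<in> components V E" and "v \<in> B"
  shows "reg E B = degree E v"
proof -
  obtain r where "\<forall>v\<in>B. degree E v = r"
    using assms(1) B unfolding regular_components_def by blast
  moreover have "(SOME v. v \<in> B) \<in> B" using component_nonempty[OF B] by (simp add: some_in_eq)
  ultimately show ?thesis unfolding reg_def using \<open>v \<in> B\<close> by simp
qed

lemma lift_edgesI: "{X, Y} \<in> H \<Longrightarrow> x \<in> X \<Longrightarrow> y \<in> Y \<Longrightarrow> {x, y} \<in> lift_edges H"
  unfolding lift_edges_def by auto

lemma lift_edges_Un: "lift_edges (G \<union> H) = lift_edges G \<union> lift_edges H"
  unfolding lift_edges_def by blast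

lemma doubleton_mem_lift_edges_iff:
  "{v, u} \<in> lift_edges H \<longleftrightarrow> (\<exists>X Y. {X, Y} \<in> H \<and> v \<in> X \<and> u \<in> Y)"
proof
  assume "{v, u} \<in> lift_edges H"
  then obtain x y X Y where "{v, u} = {x, y}" "{X, Y} \<in> H" "x \<in> X" "y \<in> Y"
    unfolding lift_edges_def by blast
  then show "\<exists>X Y. {X, Y} \<in> H \<and> v \<in> X \<and> u \<in> Y"
    unfolding doubleton_eq_iff by (metis insert_commute)
qed (auto intro: lift_edgesI)

lemma lift_edges_iff:
  assumes H: "simple_graph (components V E) H" and B: "B \<in> components V E" and "v \<in> B"
  shows "{v, u} \<in> lift_edges H \<longleftrightarrow> (\<exists>B' \<in> components V E. {B', B} \<in> H \<and> u \<in> B')"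
proof
  assume "{v, u} \<in> lift_edges H"
  then obtain X Y where XY: "{X, Y} \<in> H" and "v \<in> X" "u \<in> Y"
    unfolding doubleton_mem_lift_edges_iff by blast
  moreover have "X \<in> components V E" "Y \<in> components V E"
    using simple_graph_edgeD[OF H XY] by auto
  ultimately have "X = B" using component_unique[OF _ B _ \<open>v \<in> B\<close>] by blast
  then show "\<exists>B' \<in> components V E. {B', B} \<in> H \<and> u \<in> B'"
    using XY \<open>u \<in> Y\<close> \<open>Y \<in> components V E\<close> by (auto simp: insert_commute)
next
  assume "\<exists>B' \<in> components V E. {B', B} \<in> H \<and> u \<in> B'"
  then show "{v, u} \<in> lift_edges H"
    using \<open>v \<in> B\<close> by (auto simp: insert_commute intro: lift_edgesI)
qed

lemma degree_Un_lift_edges: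
  assumes E: "simple_graph V E" and H: "simple_graph (components V E) H"
    and B: "B \<in> components V E" and v: "v \<in> B"
  shows "degree (E \<union> lift_edges H) v = degree E v + nbsize (components V E) H B"
proof -
  let ?F = "{B' \<in> components V E. {B', B} \<in> H}"
  have fin_V: "finite V" using E by (simp add: simple_graph_def)
  have nbhd: "{u. {v, u} \<in> E \<union> lift_edges H} = {u. {v, u} \<in> E} \<union> \<Union>?F"
    using lift_edges_iff[OF H B v] by auto
  have "{u. {v, u} \<in> E} \<subseteq> V" using simple_graph_edgeD[OF E] by auto
  then have fin_E: "finite {u. {v, u} \<in> E}" using fin_V by (rule finite_subset)
  have fin_F: "finite (\<Union>?F)" using fin_V finite_components[of V E] finite_component[of V] by auto
  have "{u. {v, u} \<in> E} \<inter> \<Union>?F = {}"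
  proof -
    have "u \<in> B" if "{v, u} \<in> E" for u using component_edge_closed[OF E that B v] .
    moreover have "B \<notin> ?F" using simple_graph_edgeD[OF H, of B B] by auto
    ultimately show ?thesis using component_unique[OF _ B] by blast
  qed
  then have "degree (E \<union> lift_edges H) v = card {u. {v, u} \<in> E} + card (\<Union>?F)"
    unfolding degree_def nbhd using card_Un_disjoint[OF fin_E fin_F] by simp
  also have "card (\<Union>?F) = sum card ?F"
    by (rule card_Union_disjoint[OF pairwise_disjnt_components]) (auto simp: finite_component[OF fin_V])
  finally show ?thesis unfolding nbsize_def degree_def .
qed

lemma lift_edges_subset_cancel:
  assumes E: "simple_graph V E" and H: "simple_graph (components V E) H"
    and H': "simple_graph (components V E) H'" and eq: "E \<union> lift_edges H = E \<union> lift_edges H'"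
  shows "H \<subseteq> H'"
proof
  fix e assume "e \<in> H"
  then have "\<exists>B B'. B \<noteq> B' \<and> B \<in> components V E \<and> B' \<in> components V E \<and> e = {B, B'}"
    using H unfolding simple_graph_def by simp
  then obtain B B' where e: "e = {B, B'}" and "B \<noteq> B'"
    and B: "B \<in> components V E" and B': "B' \<in> components V E" by blast
  obtain x y where x: "x \<in> B" and y: "y \<in> B'"
    using component_nonempty[OF B] component_nonempty[OF B'] by blast
  have "{x, y} \<notin> E"
  proof
    assume "{x, y} \<in> E"
    then have "y \<in> B" by (rule component_edge_closed[OF E _ B x])
    then show False using component_unique[OF B B' _ y] \<open>B \<noteq> B'\<close> by simp
  qed
  moreover have "{x, y} \<in> lift_edges H" using lift_edgesI[of B B' H x y] \<open>e \<in> H\<close> e x y by simp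
  ultimately have "{x, y} \<in> lift_edges H'" using eq by blast
  then obtain B'' where B'': "B'' \<in> components V E" "{B'', B} \<in> H'" "y \<in> B''"
    using lift_edges_iff[OF H' B x] by blast
  then have "B'' = B'" using component_unique[OF _ B' _ y] by simp
  then show "e \<in> H'" using B''(2) e by (simp add: insert_commute)
qed

lemma quot_Un_lift_edges:
  assumes "simple_graph V E" and "simple_graph (components V E) H"
  shows "quot V E (E \<union> lift_edges H) = H"
  unfolding quot_def
proof (rule the_equality)
  fix H' assume H': "simple_graph (components V E) H' \<and> E \<union> lift_edges H = E \<union> lift_edges H'"
  show "H' = H"
  proof
    show "H' \<subseteq> H"
      using lift_edges_subset_cancel[OF assms(1) conjunct1[OF H'] assms(2)
          conjunct2[OF H', symmetric]] .
    show "H \<subseteq> H'"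
      using lift_edges_subset_cancel[OF assms(1) assms(2) conjunct1[OF H'] conjunct2[OF H']] .
  qed
qed (use assms(2) in simp)

lemma component_refines:
  assumes "E1 \<subseteq> E2" and B: "B \<in> components V E1"
  shows "\<exists>J \<in> components V E2. B \<subseteq> J"
proof -
  obtain x where x: "x \<in> B" using component_nonempty[OF B] by auto
  have "(adj E1)\<^sup>*\<^sup>* \<le> (adj E2)\<^sup>*\<^sup>*"
    using assms(1) by (intro rtranclp_mono) (auto simp: adj_def)
  then have "B \<subseteq> {y \<in> V. (adj E2)\<^sup>*\<^sup>* x y}" using component_eq[OF B x] by auto
  moreover have "x \<in> V" using component_subset[OF B] x by auto
  ultimately show ?thesis using component_of_mem[of x V E2] by blast
qed

lemma Union_components_refinement:
  assumes "E1 \<subseteq> E2" and J: "J \<in> components V E2"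
  shows "\<Union>{B \<in> components V E1. B \<subseteq> J} = J"
proof (intro equalityI subsetI)
  fix x assume "x \<in> J"
  then have "x \<in> V" using component_subset[OF J] by blast
  then obtain B where B: "B \<in> components V E1" "x \<in> B" using components_cover[of x V E1] by blast
  then obtain J' where J': "J' \<in> components V E2" "B \<subseteq> J'"
    using component_refines[OF assms(1)] by blast
  then have "J' = J" using component_unique[OF J'(1) J _ \<open>x \<in> J\<close>] B(2) by blast
  then show "x \<in> \<Union>{B \<in> components V E1. B \<subseteq> J}" using B \<open>B \<subseteq> J'\<close> by blast
qed auto

lemma card_component_refinement:
  assumes "finite V" and "E1 \<subseteq> E2" and "J \<in> components V E2"
  shows "(\<Sum>B\<in>{B \<in> components V E1. B \<subseteq> J}. card B) = card J"
proof -
  let ?F = "{B \<in> components V E1. B \<subseteq> J}"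
  have "card J = card (\<Union>?F)" using Union_components_refinement[OF assms(2,3)] by simp
  also have "\<dots> = sum card ?F"
    by (rule card_Union_disjoint[OF pairwise_disjnt_components])
      (auto simp: finite_component[OF assms(1)])
  finally show ?thesis by simp
qed

definition indexed_mat :: "'x list \<Rightarrow> 'y list \<Rightarrow> ('x \<Rightarrow> 'y \<Rightarrow> 'c) \<Rightarrow> 'c mat" where
  "indexed_mat xs ys f = mat (length xs) (length ys) (\<lambda>(i, j). f (xs ! i) (ys ! j))"

lemma indexed_mat_carrier: "indexed_mat xs ys f \<in> carrier_mat (length xs) (length ys)"
  by (simp add: indexed_mat_def)

lemma indexed_mat_mult:
  fixes f :: "'x \<Rightarrow> 'y \<Rightarrow> 'c :: comm_semiring_0"
  assumes "distinct ys"
  shows "indexed_mat xs ys f * indexed_mat ys zs g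
    = indexed_mat xs zs (\<lambda>x z. \<Sum>y\<in>set ys. f x y * g y z)"
proof (rule eq_matI)
  fix i j assume "i < dim_row (indexed_mat xs zs (\<lambda>x z. \<Sum>y\<in>set ys. f x y * g y z))"
    and "j < dim_col (indexed_mat xs zs (\<lambda>x z. \<Sum>y\<in>set ys. f x y * g y z))"
  then have "i < length xs" "j < length zs" by (simp_all add: indexed_mat_def)
  then have "(indexed_mat xs ys f * indexed_mat ys zs g) $$ (i, j)
      = (\<Sum>l<length ys. f (xs ! i) (ys ! l) * g (ys ! l) (zs ! j))"
    by (simp add: indexed_mat_def scalar_prod_def lessThan_atLeast0)
  also have "\<dots> = (\<Sum>y\<in>set ys. f (xs ! i) y * g y (zs ! j))"
    using sum.reindex_bij_betw[OF bij_betw_nth[OF assms refl refl]] by (simp add: lessThan_atLeast0)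
  finally show "(indexed_mat xs ys f * indexed_mat ys zs g) $$ (i, j)
      = indexed_mat xs zs (\<lambda>x z. \<Sum>y\<in>set ys. f x y * g y z) $$ (i, j)"
    using \<open>i < length xs\<close> \<open>j < length zs\<close> by (simp add: indexed_mat_def)
qed (simp_all add: indexed_mat_def)

lemma indexed_mat_cong:
  "(\<And>x y. x \<in> set xs \<Longrightarrow> y \<in> set ys \<Longrightarrow> f x y = g x y) \<Longrightarrow>
    indexed_mat xs ys f = indexed_mat xs ys g"
  unfolding indexed_mat_def by (intro eq_matI) auto

lemma indexed_mat_delta:
  "distinct xs \<Longrightarrow> indexed_mat xs xs (\<lambda>x y. if x = y then 1 else 0) = 1\<^sub>m (length xs)"
  unfolding indexed_mat_def by (intro eq_matI) (auto simp: nth_eq_iff_index_eq)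

lemma block_list: "finite Bs \<Longrightarrow> distinct (block_list Bs) \<and> set (block_list Bs) = Bs"
  unfolding block_list_def by (rule someI_ex) (metis finite_distinct_list)

lemma phi_eq_det_pencil:
  "phi V E H = (let Bs = components V E; bs = block_list Bs in
     det (pencil (length bs) (indexed_mat bs bs (Aent E H)) (indexed_mat bs bs (Dent E H Bs))))"
  unfolding phi_def pencil_def Let_def
  by (rule arg_cong[of _ _ det], rule eq_matI) (auto simp: indexed_mat_def)

lemma sqrt_mult_mult_sqrt_divide:
  fixes a b c :: real
  assumes "0 \<le> b"
  shows "sqrt (a * b) * sqrt (b / c) = b * sqrt (a / c)"
  using assms by (simp add: real_sqrt_mult real_sqrt_divide)

lemma mult_sqrt_divide_self:
  fixes a c :: real
  assumes "0 < c"
  shows "c * sqrt (a / c) = sqrt (a * c)"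
  using assms by (simp add: real_sqrt_mult real_sqrt_divide field_simps)

lemma sqrt_divide_mult_sqrt:
  fixes a b c :: real
  assumes "0 < b"
  shows "sqrt (a / b) * sqrt (b * c) = sqrt (a * c)"
  using assms by (simp add: real_sqrt_mult real_sqrt_divide field_simps)

definition collapse_weight :: "'a set \<Rightarrow> 'a set \<Rightarrow> real" where
  "collapse_weight B J = (if B \<subseteq> J then sqrt (real (card B) / real (card J)) else 0)"

locale division_chain =
  fixes V :: "'a set" and E1 E2 E3 :: "'a set set" and H12 H23 :: "'a set set set"
  assumes simple1: "simple_graph V E1" and simple2: "simple_graph V E2"
    and regular1: "regular_components V E1" and regular2: "regular_components V E2"
    and H12: "simple_graph (components V E1) H12" and E2_eq: "E2 = E1 \<union> lift_edges H12"
    and H23: "simple_graph (components V E2) H23" and E3_eq: "E3 = E2 \<union> lift_edges H23"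
begin

abbreviation "C1 \<equiv> components V E1"
abbreviation "C2 \<equiv> components V E2"

lemma finite_V: "finite V"
  using simple1 by (simp add: simple_graph_def)

lemma E1_subset_E2: "E1 \<subseteq> E2"
  using E2_eq by blast

definition cover :: "'a set \<Rightarrow> 'a set" where
  "cover B = (SOME J. J \<in> C2 \<and> B \<subseteq> J)"

lemma cover:
  assumes "B \<in> C1"
  shows "cover B \<in> C2" and "B \<subseteq> cover B"
proof -
  have "\<exists>J. J \<in> C2 \<and> B \<subseteq> J" using component_refines[OF E1_subset_E2 assms] by blast
  then have "cover B \<in> C2 \<and> B \<subseteq> cover B" unfolding cover_def by (rule someI_ex)
  then show "cover B \<in> C2" and "B \<subseteq> cover B" by simp_all
qed

lemma cover_eq:
  assumes B: "B \<in> C1" and J: "J \<in> C2" and "B \<subseteq> J"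
  shows "cover B = J"
proof -
  obtain x where "x \<in> B" using component_nonempty[OF B] by blast
  then show ?thesis
    using component_unique[OF cover(1)[OF B] J] cover(2)[OF B] \<open>B \<subseteq> J\<close> by blast
qed

lemma cover_eq_if_H12:
  assumes "{B, B'} \<in> H12"
  shows "cover B = cover B'"
proof -
  have B: "B \<in> C1" and B': "B' \<in> C1" using simple_graph_edgeD[OF H12 assms] by simp_all
  obtain x y where x: "x \<in> B" and y: "y \<in> B'"
    using component_nonempty[OF B] component_nonempty[OF B'] by blast
  have "{x, y} \<in> E2" using lift_edgesI[OF assms x y] E2_eq by blast
  then have "y \<in> cover B"
    by (rule component_edge_closed[OF simple2 _ cover(1)[OF B]]) (use x cover(2)[OF B] in blast)
  then show ?thesis
    using component_unique[OF cover(1)[OF B] cover(1)[OF B'] \<open>y \<in> cover B\<close>] cover(2)[OF B'] y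
    by blast
qed

definition H23_pullback :: "'a set set set" where
  "H23_pullback = {{B, B'} | B B'. B \<in> C1 \<and> B' \<in> C1 \<and> {cover B, cover B'} \<in> H23}"

definition H13 :: "'a set set set" where
  "H13 = H12 \<union> H23_pullback"

lemma H23_pullback_iff:
  assumes "B \<in> C1" and "B' \<in> C1"
  shows "{B, B'} \<in> H23_pullback \<longleftrightarrow> {cover B, cover B'} \<in> H23"
proof
  assume "{B, B'} \<in> H23_pullback"
  then obtain X Y where "{B, B'} = {X, Y}" "{cover X, cover Y} \<in> H23"
    unfolding H23_pullback_def by blast
  then show "{cover B, cover B'} \<in> H23" by (auto simp: doubleton_eq_iff insert_commute)
qed (use assms in \<open>auto simp: H23_pullback_def\<close>)

lemma H13_iff:
  assumes "B \<in> C1" and "B' \<in> C1"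
  shows "{B, B'} \<in> H13 \<longleftrightarrow> {B, B'} \<in> H12 \<or> {cover B, cover B'} \<in> H23"
  unfolding H13_def using H23_pullback_iff[OF assms] by blast

lemma simple_graph_H13: "simple_graph C1 H13"
  unfolding simple_graph_def
proof (intro conjI ballI)
  show "finite C1" by (rule finite_components[OF finite_V])
  fix e assume "e \<in> H13"
  show "\<exists>B B'. B \<noteq> B' \<and> B \<in> C1 \<and> B' \<in> C1 \<and> e = {B, B'}"
  proof (cases "e \<in> H12")
    case True
    then show ?thesis using H12 unfolding simple_graph_def by simp
  next
    case False
    then obtain B B' where "e = {B, B'}" "B \<in> C1" "B' \<in> C1" and h: "{cover B, cover B'} \<in> H23"
      using \<open>e \<in> H13\<close> unfolding H13_def H23_pullback_def by blast
    moreover have "B \<noteq> B'" using simple_graph_edgeD[OF H23 h] by auto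
    ultimately show ?thesis by blast
  qed
qed

lemma lift_edges_H23_pullback: "lift_edges H23_pullback = lift_edges H23"
proof (intro equalityI subsetI)
  fix e assume "e \<in> lift_edges H23_pullback"
  then obtain x y X Y where e: "e = {x, y}" and XY: "{X, Y} \<in> H23_pullback" and "x \<in> X" "y \<in> Y"
    unfolding lift_edges_def by blast
  moreover have X: "X \<in> C1" and Y: "Y \<in> C1"
    using XY unfolding H23_pullback_def by (auto simp: doubleton_eq_iff)
  ultimately have "{cover X, cover Y} \<in> H23" "x \<in> cover X" "y \<in> cover Y"
    using H23_pullback_iff[OF X Y] cover(2)[OF X] cover(2)[OF Y] by blast+
  then show "e \<in> lift_edges H23" unfolding e by (rule lift_edgesI)
next
  fix e assume "e \<in> lift_edges H23"
  then obtain x y J J' where e: "e = {x, y}" and h: "{J, J'} \<in> H23" and x: "x \<in> J" and y: "y \<in> J'"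
    unfolding lift_edges_def by blast
  have J: "J \<in> C2" and J': "J' \<in> C2" using simple_graph_edgeD[OF H23 h] by simp_all
  obtain B where B: "B \<in> C1" "x \<in> B"
    using components_cover[of x V E1] component_subset[OF J] x by blast
  obtain B' where B': "B' \<in> C1" "y \<in> B'"
    using components_cover[of y V E1] component_subset[OF J'] y by blast
  have "cover B = J" using component_unique[OF cover(1)[OF B(1)] J _ x] cover(2)[OF B(1)] B(2) by blast
  moreover have "cover B' = J'"
    using component_unique[OF cover(1)[OF B'(1)] J' _ y] cover(2)[OF B'(1)] B'(2) by blast
  ultimately have "{B, B'} \<in> H23_pullback" using H23_pullback_iff[OF B(1) B'(1)] h by simp
  then show "e \<in> lift_edges H23_pullback" unfolding e using B(2) B'(2) by (rule lift_edgesI)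
qed

lemma E3_eq_lift_H13: "E3 = E1 \<union> lift_edges H13"
proof -
  have "lift_edges H13 = lift_edges H12 \<union> lift_edges H23"
    unfolding H13_def lift_edges_Un lift_edges_H23_pullback ..
  then show ?thesis using E3_eq E2_eq by blast
qed

lemma reg_cover:
  assumes B: "B \<in> C1"
  shows "reg E2 (cover B) = reg E1 B + nbsize C1 H12 B"
proof -
  obtain v where v: "v \<in> B" using component_nonempty[OF B] by blast
  have "reg E2 (cover B) = degree E2 v"
    using reg_eq_degree[OF regular2 cover(1)[OF B] subsetD[OF cover(2)[OF B] v]] .
  also have "\<dots> = degree E1 v + nbsize C1 H12 B"
    unfolding E2_eq by (rule degree_Un_lift_edges[OF simple1 H12 B v])
  finally show ?thesis using reg_eq_degree[OF regular1 B v] by simp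
qed

lemma reg_add_nbsize_H13:
  assumes B: "B \<in> C1"
  shows "reg E1 B + nbsize C1 H13 B = reg E2 (cover B) + nbsize C2 H23 (cover B)"
proof -
  obtain v where v: "v \<in> B" using component_nonempty[OF B] by blast
  have v': "v \<in> cover B" using cover(2)[OF B] v by blast
  have "reg E1 B + nbsize C1 H13 B = degree E3 v"
    using degree_Un_lift_edges[OF simple1 simple_graph_H13 B v] reg_eq_degree[OF regular1 B v]
    unfolding E3_eq_lift_H13 by simp
  also have "\<dots> = reg E2 (cover B) + nbsize C2 H23 (cover B)"
    using degree_Un_lift_edges[OF simple2 H23 cover(1)[OF B] v']
      reg_eq_degree[OF regular2 cover(1)[OF B] v']
    unfolding E3_eq by simp
  finally show ?thesis .
qed

lemma H13_adjacent_iff: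
  assumes B: "B \<in> C1" and B': "B' \<in> C1"
  shows "B' \<noteq> B \<and> {B, B'} \<in> H13 \<longleftrightarrow>
    (if cover B' = cover B then {B', B} \<in> H12 else {cover B, cover B'} \<in> H23)"
proof (cases "cover B' = cover B")
  case True
  have "{cover B, cover B'} \<notin> H23"
    using simple_graph_edgeD[OF H23, of "cover B" "cover B'"] True by auto
  moreover have "B' \<noteq> B" if "{B', B} \<in> H12" using simple_graph_edgeD[OF H12 that] by simp
  ultimately show ?thesis using True H13_iff[OF B B'] by (auto simp: insert_commute)
next
  case False
  then have "{B, B'} \<notin> H12" using cover_eq_if_H12 by fastforce
  then show ?thesis using False H13_iff[OF B B'] by auto
qed

lemma H13_neighbour_mass:
  assumes B: "B \<in> C1" and J: "J \<in> C2"
  shows "(\<Sum>B'\<in>{B' \<in> C1. B' \<noteq> B \<and> B' \<subseteq> J \<and> {B, B'} \<in> H13}. card B') =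
    (if J = cover B then nbsize C1 H12 B else if {cover B, J} \<in> H23 then card J else 0)"
proof -
  have "B' \<noteq> B \<and> B' \<subseteq> J \<and> {B, B'} \<in> H13 \<longleftrightarrow>
      B' \<subseteq> J \<and> (if J = cover B then {B', B} \<in> H12 else {cover B, J} \<in> H23)" if B': "B' \<in> C1" for B'
  proof (cases "B' \<subseteq> J")
    case True
    then have "cover B' = J" by (rule cover_eq[OF B' J])
    then show ?thesis using H13_adjacent_iff[OF B B'] True by auto
  qed simp
  then have S: "{B' \<in> C1. B' \<noteq> B \<and> B' \<subseteq> J \<and> {B, B'} \<in> H13} =
      {B' \<in> C1. B' \<subseteq> J \<and> (if J = cover B then {B', B} \<in> H12 else {cover B, J} \<in> H23)}"
    by blast
  show ?thesis
  proof (cases "J = cover B")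
    case True
    have "B' \<subseteq> J" if "B' \<in> C1" "{B', B} \<in> H12" for B'
      using cover(2)[OF that(1)] cover_eq_if_H12[OF that(2)] True by simp
    then have "{B' \<in> C1. B' \<subseteq> J \<and> {B', B} \<in> H12} = {B' \<in> C1. {B', B} \<in> H12}" by blast
    then show ?thesis unfolding S nbsize_def using True by simp
  next
    case False
    then show ?thesis unfolding S
      using card_component_refinement[OF finite_V E1_subset_E2 J]
      by (cases "{cover B, J} \<in> H23") simp_all
  qed
qed

lemma collapse_weight_orthonormal:
  assumes J: "J \<in> C2" and J': "J' \<in> C2"
  shows "(\<Sum>B\<in>C1. collapse_weight B J * collapse_weight B J') = (if J = J' then 1 else 0)"
proof (cases "J = J'")
  case True
  have "(\<Sum>B\<in>C1. collapse_weight B J * collapse_weight B J')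
      = (\<Sum>B\<in>{B \<in> C1. B \<subseteq> J}. real (card B) / real (card J))"
    unfolding True collapse_weight_def sum.inter_filter[OF finite_components[OF finite_V]]
    by (intro sum.cong) auto
  also have "\<dots> = real (\<Sum>B\<in>{B \<in> C1. B \<subseteq> J}. card B) / real (card J)"
    by (simp add: sum_divide_distrib)
  also have "\<dots> = 1"
    using card_component_refinement[OF finite_V E1_subset_E2 J] card_component_pos[OF finite_V J]
    by simp
  finally show ?thesis using True by simp
next
  case False
  then have "collapse_weight B J * collapse_weight B J' = 0" if "B \<in> C1" for B
    using cover_eq[OF that J] cover_eq[OF that J'] by (auto simp: collapse_weight_def)
  then have "(\<Sum>B\<in>C1. collapse_weight B J * collapse_weight B J') = 0"
    by (intro sum.neutral) blast
  then show ?thesis using False by simp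
qed

lemma sum_collapse_weight_row:
  assumes B: "B \<in> C1"
  shows "(\<Sum>J\<in>C2. collapse_weight B J * f J) = collapse_weight B (cover B) * f (cover B)"
proof -
  have "(\<Sum>J\<in>C2. collapse_weight B J * f J)
      = (\<Sum>J\<in>C2. if J = cover B then collapse_weight B (cover B) * f (cover B) else 0)"
  proof (rule sum.cong)
    fix J assume "J \<in> C2"
    show "collapse_weight B J * f J
        = (if J = cover B then collapse_weight B (cover B) * f (cover B) else 0)"
    proof (cases "J = cover B")
      case False
      then have "\<not> B \<subseteq> J" using cover_eq[OF B \<open>J \<in> C2\<close>] by blast
      then show ?thesis using False by (simp add: collapse_weight_def)
    qed simp
  qed simp
  then show ?thesis using cover(1)[OF B] finite_components[OF finite_V] by simp
qed

lemma sum_Aent_H13_collapse_weight: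
  assumes B: "B \<in> C1"
  shows "(\<Sum>B'\<in>C1. Aent E1 H13 B B' * collapse_weight B' J) =
    real (reg E1 B) * collapse_weight B J + sqrt (real (card B) / real (card J))
      * (\<Sum>B'\<in>{B' \<in> C1. B' \<noteq> B \<and> B' \<subseteq> J \<and> {B, B'} \<in> H13}. real (card B'))"
proof -
  let ?s = "sqrt (real (card B) / real (card J))"
  have "Aent E1 H13 B B' * collapse_weight B' J
      = (if B' = B then real (reg E1 B) * collapse_weight B J else 0)
      + (if B' \<noteq> B \<and> B' \<subseteq> J \<and> {B, B'} \<in> H13 then ?s * real (card B') else 0)" for B'
    using sqrt_mult_mult_sqrt_divide[of "real (card B')" "real (card B)" "real (card J)"]
    by (auto simp: Aent_def collapse_weight_def insert_commute mult.commute)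
  then have "(\<Sum>B'\<in>C1. Aent E1 H13 B B' * collapse_weight B' J)
      = (\<Sum>B'\<in>C1. if B' = B then real (reg E1 B) * collapse_weight B J else 0)
      + (\<Sum>B'\<in>C1. if B' \<noteq> B \<and> B' \<subseteq> J \<and> {B, B'} \<in> H13 then ?s * real (card B') else 0)"
    by (simp add: sum.distrib)
  then show ?thesis
    using B finite_components[OF finite_V]
    by (simp add: sum.inter_filter[symmetric] sum_distrib_left)
qed

lemma Aent_collapse_weight_intertwine:
  assumes B: "B \<in> C1" and J: "J \<in> C2"
  shows "(\<Sum>B'\<in>C1. Aent E1 H13 B B' * collapse_weight B' J)
    = (\<Sum>J'\<in>C2. collapse_weight B J' * Aent E2 H23 J' J)"
proof -
  have cJ: "real (card J) > 0" and cB: "real (card (cover B)) > 0"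
    using card_component_pos[OF finite_V] J cover(1)[OF B] by simp_all
  have mass: "(\<Sum>B'\<in>{B' \<in> C1. B' \<noteq> B \<and> B' \<subseteq> J \<and> {B, B'} \<in> H13}. real (card B'))
      = real (if J = cover B then nbsize C1 H12 B else if {cover B, J} \<in> H23 then card J else 0)"
    unfolding of_nat_sum[symmetric] H13_neighbour_mass[OF B J] ..
  note sums = sum_Aent_H13_collapse_weight[OF B, of J] sum_collapse_weight_row[OF B] mass
  consider "J = cover B" | "J \<noteq> cover B" "{cover B, J} \<in> H23" | "J \<noteq> cover B" "{cover B, J} \<notin> H23"
    by blast
  then show ?thesis
  proof cases
    case 1
    then show ?thesis
      unfolding sums using reg_cover[OF B] cover(2)[OF B]
      by (simp add: collapse_weight_def Aent_def algebra_simps)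
  next
    case 2
    then have "\<not> B \<subseteq> J" using cover_eq[OF B J] by blast
    then show ?thesis
      unfolding sums using 2 cover(2)[OF B] mult_sqrt_divide_self[OF cJ] sqrt_divide_mult_sqrt[OF cB]
      by (simp add: collapse_weight_def Aent_def mult.commute)
  next
    case 3
    then have "\<not> B \<subseteq> J" using cover_eq[OF B J] by blast
    then show ?thesis
      unfolding sums using 3 by (simp add: collapse_weight_def Aent_def)
  qed
qed

lemma Dent_collapse_weight_intertwine:
  assumes B: "B \<in> C1" and J: "J \<in> C2"
  shows "(\<Sum>B'\<in>C1. Dent E1 H13 C1 B B' * collapse_weight B' J)
    = (\<Sum>J'\<in>C2. collapse_weight B J' * Dent E2 H23 C2 J' J)"
proof -
  have "(\<Sum>B'\<in>C1. Dent E1 H13 C1 B B' * collapse_weight B' J)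
      = (\<Sum>B'\<in>C1. if B' = B then Dent E1 H13 C1 B B * collapse_weight B J else 0)"
    by (rule sum.cong) (simp_all add: Dent_def)
  also have "\<dots> = Dent E1 H13 C1 B B * collapse_weight B J"
    using B finite_components[OF finite_V] by simp
  also have "\<dots> = collapse_weight B (cover B) * Dent E2 H23 C2 (cover B) J"
  proof (cases "J = cover B")
    case True
    then show ?thesis using reg_add_nbsize_H13[OF B] by (simp add: Dent_def)
  next
    case False
    then have "\<not> B \<subseteq> J" using cover_eq[OF B J] by blast
    then show ?thesis using False by (simp add: Dent_def collapse_weight_def)
  qed
  also have "\<dots> = (\<Sum>J'\<in>C2. collapse_weight B J' * Dent E2 H23 C2 J' J)"
    by (rule sum_collapse_weight_row[OF B, symmetric])
  finally show ?thesis .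
qed

abbreviation "bs1 \<equiv> block_list C1"
abbreviation "bs2 \<equiv> block_list C2"

lemma block_list_C1: "distinct bs1" "set bs1 = C1"
  using block_list[OF finite_components[OF finite_V]] by simp_all

lemma block_list_C2: "distinct bs2" "set bs2 = C2"
  using block_list[OF finite_components[OF finite_V]] by simp_all

lemma phi_H23_dvd_phi_H13: "phi V E2 H23 dvd phi V E1 H13"
proof -
  define W where "W = indexed_mat bs1 bs2 collapse_weight"
  define L where "L = indexed_mat bs2 bs1 (\<lambda>J B. collapse_weight B J)"
  define A1 where "A1 = indexed_mat bs1 bs1 (Aent E1 H13)"
  define D1 where "D1 = indexed_mat bs1 bs1 (Dent E1 H13 C1)"
  define A2 where "A2 = indexed_mat bs2 bs2 (Aent E2 H23)"
  define D2 where "D2 = indexed_mat bs2 bs2 (Dent E2 H23 C2)"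
  note carriers = indexed_mat_carrier W_def L_def A1_def D1_def A2_def D2_def
  have "L * W = indexed_mat bs2 bs2 (\<lambda>J J'. if J = J' then 1 else 0)"
    unfolding L_def W_def indexed_mat_mult[OF block_list_C1(1)]
    by (rule indexed_mat_cong)
      (simp add: block_list_C1(2) block_list_C2(2) collapse_weight_orthonormal)
  then have LW: "L * W = 1\<^sub>m (length bs2)" by (simp add: indexed_mat_delta[OF block_list_C2(1)])
  have AW: "A1 * W = W * A2"
    unfolding A1_def A2_def W_def
      indexed_mat_mult[OF block_list_C1(1)] indexed_mat_mult[OF block_list_C2(1)]
    by (rule indexed_mat_cong)
      (simp add: block_list_C1(2) block_list_C2(2) Aent_collapse_weight_intertwine)
  have DW: "D1 * W = W * D2"
    unfolding D1_def D2_def W_def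
      indexed_mat_mult[OF block_list_C1(1)] indexed_mat_mult[OF block_list_C2(1)]
    by (rule indexed_mat_cong)
      (simp add: block_list_C1(2) block_list_C2(2) Dent_collapse_weight_intertwine)
  interpret cst: semiring_hom cst by (rule cst_hom)
  have "map_mat cst L * map_mat cst W = 1\<^sub>m (length bs2)"
    using LW cst.mat_hom_mult[of L "length bs2" "length bs1" W "length bs2"] cst.mat_hom_one
    by (simp add: carriers)
  moreover have
    "pencil (length bs1) A1 D1 * map_mat cst W = map_mat cst W * pencil (length bs2) A2 D2"
    by (rule pencil_intertwine[OF _ _ _ _ _ AW DW]) (simp_all add: carriers)
  ultimately have "det (pencil (length bs2) A2 D2) dvd det (pencil (length bs1) A1 D1)"
    by (intro det_dvd_of_intertwining[of _ "length bs1" _ "length bs2" "map_mat cst W" "map_mat cst L"])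
      (simp_all add: pencil_carrier carriers)
  then show ?thesis
    unfolding phi_eq_det_pencil[of V E1] phi_eq_det_pencil[of V E2] Let_def
      A1_def D1_def A2_def D2_def .
qed

end

theorem mainTheorem9:
  fixes V :: "'a set" and E1 E2 E3 :: "'a set set"
  assumes "simple_graph V E1" and "simple_graph V E2" and "simple_graph V E3"
    and "regular_components V E1" and "regular_components V E2"
    and "divides V E1 E2" and "divides V E2 E3"
  shows "divides V E1 E3 \<and> phi V E2 (quot V E2 E3) dvd phi V E1 (quot V E1 E3)"
proof -
  obtain H12 where "simple_graph (components V E1) H12" "E2 = E1 \<union> lift_edges H12"
    using assms(6) unfolding divides_def by blast
  moreover obtain H23 where "simple_graph (components V E2) H23" "E3 = E2 \<union> lift_edges H23"
    using assms(7) unfolding divides_def by blast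
  ultimately interpret division_chain V E1 E2 E3 H12 H23
    using assms(1,2,4,5) by unfold_locales
  have "divides V E1 E3"
    unfolding divides_def using simple_graph_H13 E3_eq_lift_H13 by blast
  moreover have "quot V E1 E3 = H13"
    unfolding E3_eq_lift_H13 by (rule quot_Un_lift_edges[OF simple1 simple_graph_H13])
  moreover have "quot V E2 E3 = H23"
    unfolding E3_eq by (rule quot_Un_lift_edges[OF simple2 H23])
  ultimately show ?thesis using phi_H23_dvd_phi_H13 by simp
qed

end
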